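(* Let $\Delta$ be an ordinary subgraph of $T$ and let $\varepsilon$ be the minimal integer direction vector of an edge (one-dimensional face) of the cone $C_\Delta$. Then there exist two ordinary subgraphs $\Delta_1,\Delta_2$ of $T$ with disjoint node sets whose union is the node set of $\Delta$, with the top node $(i_\Delta,j_\Delta)$ belonging to $\Delta_1$, such that $\varepsilon_{i,j}=0$ for all nodes $(i,j)$ of $\Delta_1$, and $\varepsilon_{i,j}=c$ for all nodes $(i,j)$ of $\Delta_2$, for a single constant $c\in\{1,-1\}$.
   Context: Fix $n\ge 1$. Let $T$ be the graph with node set $\{(i,j):0\le i\le n-1,\ 1\le j\le n-i\}$ ("row $i$" consists of the nodes $(i,\cdot)$) in which, for every $1\le i\le n-1$, $1\le j\le n-i$, the node $(i,j)$ is adjacent to $(i-1,j)$ and to $(i-1,j+1)$, and there are no other edges. A subgraph $\Delta\subset T$ is ordinary if it is connected, induced, and whenever it contains both $(i,j)$ and $(i,j+1)$ it also contains $(i-1,j+1)$ and $(i+1,j)$. For ordinary $\Delta$ the smallest-index row meeting $\Delta$ contains exactly one node of $\Delta$, the top node $(i_\Delta,j_\Delta)$. In $\mathbb R^{n(n+1)/2}$ with coordinates $x_{i,j}$ indexed by nodes of $T$, $C_\Delta$ is the set of $x$ with: $x_{i,j}=0$ for $(i,j)\notin\Delta$; $x_{i_\Delta,j_\Delta}=0$; $x_{i-1,j}\ge x_{i,j}$ for every edge of $\Delta$ joining $(i,j)$ and $(i-1,j)$; $x_{i,j}\ge x_{i-1,j+1}$ for every edge of $\Delta$ joining $(i,j)$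 and $(i-1,j+1)$. *)

theory Defs
  imports "HOL-Analysis.Analysis"
begin

type_synonym node = "int \<times> int"

definition T_nodes :: "nat \<Rightarrow> node set" where
  "T_nodes n = {(i,j). 0 \<le> i \<and> i \<le> int n - 1 \<and> 1 \<le> j \<and> j \<le> int n - i}"

definition T_adj :: "nat \<Rightarrow> node \<Rightarrow> node \<Rightarrow> bool" where
  "T_adj n p q \<longleftrightarrow> p \<in> T_nodes n \<and> q \<in> T_nodes n \<and>
     ((fst p \<ge> 1 \<and> fst q = fst p - 1 \<and> (snd q = snd p \<or> snd q = snd p + 1)) \<or>
      (fst q \<ge> 1 \<and> fst p = fst q - 1 \<and> (snd p = snd q \<or> snd p = snd q + 1)))"

definition induced_connected :: "nat \<Rightarrow> node set \<Rightarrow> bool" where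
  "induced_connected n D \<longleftrightarrow> D \<noteq> {} \<and>
     (\<forall>p\<in>D. \<forall>q\<in>D. (p, q) \<in> {(a, b). a \<in> D \<and> b \<in> D \<and> T_adj n a b}\<^sup>*)"

text \<open>Ordinary subgraphs (induced subgraphs are identified with their node sets).\<close>
definition ordinary :: "nat \<Rightarrow> node set \<Rightarrow> bool" where
  "ordinary n D \<longleftrightarrow> D \<subseteq> T_nodes n \<and> induced_connected n D \<and>
     (\<forall>i j. (i, j) \<in> D \<and> (i, j + 1) \<in> D \<longrightarrow> (i - 1, j + 1) \<in> D \<and> (i + 1, j) \<in> D)"

definition top_node :: "node set \<Rightarrow> node" where
  "top_node D = (THE p. p \<in> D \<and> fst p = Min (fst ` D))"

definition cone_C :: "node set \<Rightarrow> (node \<Rightarrow> real) set" where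
  "cone_C D = {x. (\<forall>p. p \<notin> D \<longrightarrow> x p = 0) \<and> x (top_node D) = 0 \<and>
     (\<forall>i j. (i, j) \<in> D \<and> (i - 1, j) \<in> D \<longrightarrow> x (i - 1, j) \<ge> x (i, j)) \<and>
     (\<forall>i j. (i, j) \<in> D \<and> (i - 1, j + 1) \<in> D \<longrightarrow> x (i, j) \<ge> x (i - 1, j + 1))}"

text \<open>Faces of a convex set of vectors (functions), literally as HOL-Analysis face_of.\<close>
definition fface_of :: "(node \<Rightarrow> real) set \<Rightarrow> (node \<Rightarrow> real) set \<Rightarrow> bool" where
  "fface_of F C \<longleftrightarrow> F \<subseteq> C \<and>
     (\<forall>a\<in>F. \<forall>b\<in>F. \<forall>u::real. 0 \<le> u \<and> u \<le> 1 \<longrightarrow> (\<lambda>p. (1 - u) * a p + u * b p) \<in> F) \<and>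
     (\<forall>a\<in>C. \<forall>b\<in>C. \<forall>x\<in>F. a \<noteq> b \<and> (\<exists>u::real. 0 < u \<and> u < 1 \<and> x = (\<lambda>p. (1 - u) * a p + u * b p))
        \<longrightarrow> a \<in> F \<and> b \<in> F)"

definition min_int_edge_dir :: "(node \<Rightarrow> real) set \<Rightarrow> (node \<Rightarrow> real) \<Rightarrow> bool" where
  "min_int_edge_dir C eps \<longleftrightarrow> eps \<noteq> (\<lambda>p. 0) \<and>
     fface_of {x. \<exists>t::real. t \<ge> 0 \<and> x = (\<lambda>p. t * eps p)} C \<and>
     (\<forall>p. eps p \<in> \<int>) \<and>
     (\<forall>t::real. t > 0 \<and> (\<forall>p. t * eps p \<in> \<int>) \<longrightarrow> t \<ge> 1)"

end

theory Submission
  imports Defs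
begin

(* Let E be the edges of Delta along which eps is constant. If S is a union of E-components
   avoiding the top node, then eps + d * 1_S and eps - d * 1_S stay in C_Delta for small d > 0:
   each cone inequality is either an equality along an E-edge, which S does not cut, or strict
   with some slack. Since eps is their midpoint and spans an extreme ray, 1_S is a multiple of
   eps. For the E-component K of a node where eps is nonzero this gives eps = c * 1_K; for an
   E-component of a zero of eps missing the top node it would force eps = 0. So the two level
   sets {eps = 0} and {eps = c} are E-components, hence connected, and they inherit the closure
   condition of ordinary subgraphs because the cone inequalities squeeze the two new nodes
   between equal values. Minimality of the integer vector eps gives c = 1 or c = -1.
   That the top node exists at all (the first row of an ordinary subgraph has a single node)
   is shown by shortening a walk between two nodes of that row at its highest-row node. *)

lemma T_adj_sym: "T_adj n a b \<Longrightarrow> T_adj n b a"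
  unfolding T_adj_def by auto

lemma T_adj_row: "T_adj n a b \<Longrightarrow> fst b = fst a + 1 \<or> fst b = fst a - 1"
  unfolding T_adj_def by auto

lemma T_adj_from_below:
  assumes "T_adj n u (i, j)" "fst u \<le> i"
  shows "u = (i - 1, j) \<or> u = (i - 1, j + 1)"
  using assms unfolding T_adj_def by (cases u) auto

lemma T_adj_up:
  assumes "(i, j) \<in> T_nodes n" "(i - 1, j) \<in> T_nodes n"
  shows "T_adj n (i, j) (i - 1, j)"
  using assms unfolding T_adj_def T_nodes_def by auto

lemma T_adj_up_right:
  assumes "(i, j) \<in> T_nodes n" "(i - 1, j + 1) \<in> T_nodes n"
  shows "T_adj n (i, j) (i - 1, j + 1)"
  using assms unfolding T_adj_def T_nodes_def by auto

lemma T_nodes_row_nonneg: "p \<in> T_nodes n \<Longrightarrow> 0 \<le> fst p"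
  unfolding T_nodes_def by auto

lemma finite_T_nodes: "finite (T_nodes n)"
proof (rule finite_subset)
  show "T_nodes n \<subseteq> {0..int n} \<times> {1..int n}"
    unfolding T_nodes_def by auto
qed simp

lemma ordinary_finite: "ordinary n D \<Longrightarrow> finite D"
  unfolding ordinary_def using finite_T_nodes finite_subset by blast

definition walk :: "nat \<Rightarrow> node set \<Rightarrow> node list \<Rightarrow> bool" where
  "walk n D xs \<longleftrightarrow> xs \<noteq> [] \<and> set xs \<subseteq> D \<and> successively (T_adj n) xs"

lemma rtrancl_walk:
  assumes "(p, q) \<in> {(a, b). a \<in> D \<and> b \<in> D \<and> T_adj n a b}\<^sup>*" "p \<in> D"
  obtains xs where "walk n D xs" "hd xs = p" "last xs = q"
proof -
  from assms have "\<exists>xs. walk n D xs \<and> hd xs = p \<and> last xs = q"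
  proof (induction rule: rtrancl_induct)
    case base
    show ?case by (intro exI[of _ "[p]"]) (use base in \<open>auto simp: walk_def\<close>)
  next
    case (step y z)
    then obtain xs where "walk n D xs" "hd xs = p" "last xs = y" by auto
    with step show ?case
      by (intro exI[of _ "xs @ [z]"]) (auto simp: walk_def successively_append_iff)
  qed
  with that show thesis by blast
qed

lemma successively_replace:
  assumes "successively R (as @ v # bs)" "as \<noteq> []" "bs \<noteq> []"
    and "R (last as) v'" "R v' (hd bs)"
  shows "successively R (as @ v' # bs)"
  using assms by (cases bs) (auto simp: successively_append_iff)

lemma successively_cut_backtrack:
  assumes "successively R (as @ v # bs)" "as \<noteq> []" "bs \<noteq> []" "last as = hd bs"
  shows "successively R (as @ tl bs)"
  using assms by (cases bs) (auto simp: successively_append_iff successively_Cons)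

definition row_weight :: "node list \<Rightarrow> nat" where
  "row_weight xs = (\<Sum>x\<leftarrow>xs. nat (fst x))"

lemma row_weight_append_Cons [simp]:
  "row_weight (as @ v # bs) = row_weight as + nat (fst v) + row_weight bs"
  by (simp add: row_weight_def)

lemma walk_peak:
  assumes low: "\<forall>x\<in>D. L \<le> fst x"
    and wk: "walk n D xs" and ends: "fst (hd xs) = L" "fst (last xs) = L" "hd xs \<noteq> last xs"
  obtains as bs M j where "xs = as @ (M, j) # bs" "as \<noteq> []" "bs \<noteq> []" "L < M"
    "last as = (M - 1, j) \<or> last as = (M - 1, j + 1)"
    "hd bs = (M - 1, j) \<or> hd bs = (M - 1, j + 1)"
proof -
  have xsD: "set xs \<subseteq> D" and succ: "successively (T_adj n) xs" and ne: "xs \<noteq> []"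
    using wk unfolding walk_def by auto
  define M where "M = Max (fst ` set xs)"
  have le_M: "fst x \<le> M" if "x \<in> set xs" for x
    unfolding M_def using that by (intro Max_ge) auto
  have "M \<in> fst ` set xs" unfolding M_def using ne by (intro Max_in) auto
  then obtain j where "(M, j) \<in> set xs" by force
  then obtain as bs where xs_split: "xs = as @ (M, j) # bs" by (meson split_list)
  have "L < M"
  proof -
    obtain x1 x2 rest where xs: "xs = x1 # x2 # rest"
      using ne ends(3) by (cases xs rule: remdups_adj.cases) auto
    then have "T_adj n x1 x2" "x2 \<in> D" using succ xsD by auto
    then have "fst x2 = L + 1"
      using T_adj_row low ends(1) xs by fastforce
    then show ?thesis using le_M[of x2] xs by auto
  qed
  then have as_ne: "as \<noteq> []" and bs_ne: "bs \<noteq> []"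
    using ends(1,2) unfolding xs_split by auto
  have "T_adj n (last as) (M, j)" "T_adj n (hd bs) (M, j)"
    using succ as_ne bs_ne T_adj_sym unfolding xs_split
    by (auto simp: successively_append_iff successively_Cons neq_Nil_conv)
  moreover have "fst (last as) \<le> M" "fst (hd bs) \<le> M"
    using le_M as_ne bs_ne unfolding xs_split by auto
  ultimately show thesis
    by (intro that[OF xs_split as_ne bs_ne \<open>L < M\<close>] T_adj_from_below)
qed

(* Either the walk backtracks at its peak (M, j) and the detour is cut out, or it passes
   (M - 1, j), (M, j), (M - 1, j + 1) in some order and the closure of ordinary subgraphs lets it
   pass through (M - 2, j + 1) instead. *)
lemma walk_shortening:
  assumes ord: "ordinary n D" and low: "\<forall>x\<in>D. L \<le> fst x"
    and wk: "walk n D xs" and ends: "fst (hd xs) = L" "fst (last xs) = L" "hd xs \<noteq> last xs"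
  obtains ys where "walk n D ys" "hd ys = hd xs" "last ys = last xs"
    "row_weight ys < row_weight xs"
proof -
  obtain as bs M j where xs_split: "xs = as @ (M, j) # bs" and ne: "as \<noteq> []" "bs \<noteq> []"
    and "L < M" and u: "last as = (M - 1, j) \<or> last as = (M - 1, j + 1)"
    and w: "hd bs = (M - 1, j) \<or> hd bs = (M - 1, j + 1)"
    using walk_peak[OF low wk ends] .
  have DT: "D \<subseteq> T_nodes n" using ord unfolding ordinary_def by blast
  have xsD: "set xs \<subseteq> D" and succ: "successively (T_adj n) xs"
    using wk unfolding walk_def by auto
  have "hd xs \<in> set xs" by (rule hd_in_set) (simp add: xs_split)
  then have "hd xs \<in> T_nodes n" using xsD DT by blast
  then have L0: "0 \<le> L" using ends(1) T_nodes_row_nonneg by fastforce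
  show thesis
  proof (cases "last as = hd bs")
    case True
    define ys where "ys = as @ tl bs"
    have "set ys \<subseteq> set xs" using list.set_sel(2)[OF ne(2)] unfolding ys_def xs_split by auto
    then have "walk n D ys"
      using successively_cut_backtrack[OF _ ne True] succ xsD ne
      unfolding walk_def ys_def xs_split by auto
    moreover have "hd ys = hd xs" "last ys = last xs"
      using ne True unfolding ys_def xs_split by (cases bs; simp)+
    moreover have "row_weight ys < row_weight xs"
      using \<open>L < M\<close> L0 ne unfolding ys_def xs_split by (cases bs) (auto simp: row_weight_def)
    ultimately show thesis by (rule that)
  next
    case False
    have "last as \<in> D" "hd bs \<in> D"
      using last_in_set[OF ne(1)] hd_in_set[OF ne(2)] xsD unfolding xs_split by auto
    with False have "(M - 1, j) \<in> D" "(M - 1, j + 1) \<in> D"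
      using u w by auto
    then have v'D: "(M - 2, j + 1) \<in> D"
      using ord unfolding ordinary_def by (metis diff_diff_eq one_add_one)
    have "T_adj n x (M - 2, j + 1)" if "x = (M - 1, j) \<or> x = (M - 1, j + 1)" for x
      using that T_adj_up[of "M - 1" "j + 1" n] T_adj_up_right[of "M - 1" j n] DT v'D
        \<open>(M - 1, j) \<in> D\<close> \<open>(M - 1, j + 1) \<in> D\<close> by auto
    then have "T_adj n (last as) (M - 2, j + 1)" "T_adj n (M - 2, j + 1) (hd bs)"
      using u w T_adj_sym by blast+
    define ys where "ys = as @ (M - 2, j + 1) # bs"
    have "walk n D ys"
      using successively_replace[OF _ ne] succ xsD v'D
        \<open>T_adj n (last as) (M - 2, j + 1)\<close> \<open>T_adj n (M - 2, j + 1) (hd bs)\<close>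
      unfolding walk_def ys_def xs_split by auto
    moreover have "hd ys = hd xs" "last ys = last xs"
      using ne unfolding ys_def xs_split by auto
    moreover have "L \<le> M - 2" using low v'D by auto
    then have "row_weight ys < row_weight xs"
      using L0 unfolding ys_def xs_split by auto
    ultimately show thesis by (rule that)
  qed
qed

lemma ordinary_min_row_unique:
  assumes ord: "ordinary n D"
    and p: "p \<in> D" "fst p = Min (fst ` D)" and q: "q \<in> D" "fst q = Min (fst ` D)"
  shows "p = q"
proof (rule ccontr)
  assume "p \<noteq> q"
  have low: "\<forall>x\<in>D. Min (fst ` D) \<le> fst x"
    using ordinary_finite[OF ord] by simp
  have "(p, q) \<in> {(a, b). a \<in> D \<and> b \<in> D \<and> T_adj n a b}\<^sup>*"
    using ord p(1) q(1) unfolding ordinary_def induced_connected_def by blast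
  then obtain xs where "walk n D xs" "hd xs = p" "last xs = q"
    using rtrancl_walk p(1) by blast
  then obtain xs where xs: "walk n D xs" "hd xs = p" "last xs = q"
    and least: "\<And>ys. walk n D ys \<Longrightarrow> hd ys = p \<Longrightarrow> last ys = q \<Longrightarrow> row_weight xs \<le> row_weight ys"
    using ex_has_least_nat[of "\<lambda>xs. walk n D xs \<and> hd xs = p \<and> last xs = q" _ row_weight]
    by blast
  obtain ys where "walk n D ys" "hd ys = p" "last ys = q" "row_weight ys < row_weight xs"
    using walk_shortening[OF ord low xs(1)] xs p(2) q(2) \<open>p \<noteq> q\<close> by metis
  with least show False by fastforce
qed

lemma top_node_in_ordinary:
  assumes ord: "ordinary n D"
  shows "top_node D \<in> D"
proof -
  have "D \<noteq> {}" using ord unfolding ordinary_def induced_connected_def by blast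
  then have "Min (fst ` D) \<in> fst ` D"
    using ordinary_finite[OF ord] by (intro Min_in) auto
  then obtain p where p: "p \<in> D" "fst p = Min (fst ` D)" by auto
  have "top_node D = p"
    unfolding top_node_def using p ordinary_min_row_unique[OF ord _ _ p] by blast
  with p show ?thesis by simp
qed

lemma rtrancl_restrict_closed:
  assumes "(a, b) \<in> r\<^sup>*" "a \<in> S" "r `` S \<subseteq> S"
  shows "(a, b) \<in> (r \<inter> S \<times> S)\<^sup>*"
proof -
  from assms(1) have "(a, b) \<in> (r \<inter> S \<times> S)\<^sup>* \<and> b \<in> S"
  proof (induction rule: rtrancl_induct)
    case (step y z)
    then have "(y, z) \<in> r \<inter> S \<times> S" using assms(3) by blast
    with step show ?case by (blast intro: rtrancl_into_rtrancl)
  qed (use assms(2) in simp)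
  then show ?thesis ..
qed

lemma sym_rtrancl_Image_iff:
  assumes "sym r" "(a, b) \<in> r"
  shows "a \<in> r\<^sup>* `` A \<longleftrightarrow> b \<in> r\<^sup>* `` A"
proof -
  have "(b, a) \<in> r" using assms by (rule symD)
  with assms(2) show ?thesis by (meson ImageE ImageI rtrancl.rtrancl_into_rtrancl)
qed

definition level_edges :: "nat \<Rightarrow> node set \<Rightarrow> (node \<Rightarrow> real) \<Rightarrow> node rel" where
  "level_edges n D x = {(a, b). a \<in> D \<and> b \<in> D \<and> T_adj n a b \<and> x a = x b}"

lemma sym_level_edges: "sym (level_edges n D x)"
  unfolding sym_def level_edges_def using T_adj_sym by auto

lemma level_edges_rtrancl:
  assumes "(a, b) \<in> (level_edges n D x)\<^sup>*" "a \<in> D"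
  shows "b \<in> D \<and> x b = x a"
  using assms by (induction rule: rtrancl_induct) (auto simp: level_edges_def)

lemma cone_C_memD:
  assumes "x \<in> cone_C D"
  shows "p \<notin> D \<Longrightarrow> x p = 0" and "x (top_node D) = 0"
    and "(i, j) \<in> D \<Longrightarrow> (i - 1, j) \<in> D \<Longrightarrow> x (i, j) \<le> x (i - 1, j)"
    and "(i, j) \<in> D \<Longrightarrow> (i - 1, j + 1) \<in> D \<Longrightarrow> x (i - 1, j + 1) \<le> x (i, j)"
  using assms unfolding cone_C_def by (auto simp del: split_paired_All)

lemma cone_C_level_set_closed:
  assumes x: "x \<in> cone_C D" and ord: "ordinary n D"
    and D: "(i, j) \<in> D" "(i, j + 1) \<in> D" and v: "x (i, j) = v" "x (i, j + 1) = v"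
  shows "(i - 1, j + 1) \<in> D \<and> x (i - 1, j + 1) = v \<and> (i + 1, j) \<in> D \<and> x (i + 1, j) = v"
proof -
  have D': "(i - 1, j + 1) \<in> D" "(i + 1, j) \<in> D"
    using ord D unfolding ordinary_def by blast+
  have "x (i, j + 1) \<le> x (i - 1, j + 1)" "x (i - 1, j + 1) \<le> x (i, j)"
    "x (i, j + 1) \<le> x (i + 1, j)" "x (i + 1, j) \<le> x (i, j)"
    using cone_C_memD(3,4)[OF x] cone_C_memD(3,4)[OF x, of "i + 1" j] D D' by auto
  with D' v show ?thesis by auto
qed

lemma ordinary_level_set:
  assumes ord: "ordinary n D" and x: "x \<in> cone_C D" and p: "p \<in> D"
    and conn: "{q \<in> D. x q = x p} \<subseteq> (level_edges n D x)\<^sup>* `` {p}"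
  shows "ordinary n {q \<in> D. x q = x p}"
proof -
  let ?V = "{q \<in> D. x q = x p}"
  have "(a, b) \<in> {(a, b). a \<in> ?V \<and> b \<in> ?V \<and> T_adj n a b}\<^sup>*" if "a \<in> ?V" "b \<in> ?V" for a b
  proof -
    have "(p, a) \<in> (level_edges n D x)\<^sup>*" "(p, b) \<in> (level_edges n D x)\<^sup>*"
      using conn that by blast+
    then have "(a, b) \<in> (level_edges n D x)\<^sup>*"
      using sym_level_edges[THEN sym_rtrancl, THEN symD] rtrancl_trans by metis
    moreover have "level_edges n D x `` ?V \<subseteq> ?V"
      unfolding level_edges_def by (auto simp: Image_def)
    ultimately have "(a, b) \<in> (level_edges n D x \<inter> ?V \<times> ?V)\<^sup>*"
      by (rule rtrancl_restrict_closed[OF _ that(1)])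
    moreover have "level_edges n D x \<inter> ?V \<times> ?V \<subseteq> {(a, b). a \<in> ?V \<and> b \<in> ?V \<and> T_adj n a b}"
      unfolding level_edges_def by blast
    ultimately show ?thesis
      using rtrancl_mono by blast
  qed
  moreover have "(i - 1, j + 1) \<in> ?V \<and> (i + 1, j) \<in> ?V" if "(i, j) \<in> ?V" "(i, j + 1) \<in> ?V" for i j
    using cone_C_level_set_closed[OF x ord, of i j "x p"] that by auto
  moreover have "?V \<subseteq> T_nodes n" "?V \<noteq> {}"
    using ord p unfolding ordinary_def by blast+
  ultimately show ?thesis
    unfolding ordinary_def induced_connected_def by blast
qed

lemma finite_values_gap:
  fixes x :: "'a \<Rightarrow> real"
  assumes "finite D"
  obtains \<delta> where "\<delta> > 0" "\<forall>a\<in>D. \<forall>b\<in>D. x a \<noteq> x b \<longrightarrow> \<delta> \<le> \<bar>x a - x b\<bar>"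
proof -
  define G where "G = insert 1 ((\<lambda>(a, b). \<bar>x a - x b\<bar>) ` (D \<times> D) - {0})"
  have fin: "finite G" unfolding G_def using assms by simp
  show thesis
  proof (rule that)
    have "\<forall>g\<in>G. 0 < g" unfolding G_def by auto
    then show "Min G > 0" using fin Min_gr_iff[of G 0] unfolding G_def by blast
    show "\<forall>a\<in>D. \<forall>b\<in>D. x a \<noteq> x b \<longrightarrow> Min G \<le> \<bar>x a - x b\<bar>"
    proof (intro ballI impI)
      fix a b assume "a \<in> D" "b \<in> D" "x a \<noteq> x b"
      then have "\<bar>x a - x b\<bar> \<in> G" unfolding G_def by force
      with fin show "Min G \<le> \<bar>x a - x b\<bar>" by (rule Min_le)
    qed
  qed
qed

lemma cone_C_shift_indicator:
  assumes x: "x \<in> cone_C D" and DT: "D \<subseteq> T_nodes n"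
    and S: "S \<subseteq> D" "top_node D \<notin> S"
    and closed: "\<And>a b. (a, b) \<in> level_edges n D x \<Longrightarrow> a \<in> S \<longleftrightarrow> b \<in> S"
    and gap: "\<forall>a\<in>D. \<forall>b\<in>D. x a \<noteq> x b \<longrightarrow> 2 * \<delta> \<le> \<bar>x a - x b\<bar>" and d: "\<bar>d\<bar> \<le> \<delta>"
  shows "(\<lambda>p. x p + d * indicator S p) \<in> cone_C D"
proof -
  let ?y = "\<lambda>p. x p + d * indicator S p"
  have mono: "?y u \<le> ?y v" if uv: "u \<in> D" "v \<in> D" "T_adj n u v" "x u \<le> x v" for u v
  proof (cases "x u = x v")
    case True
    then have "u \<in> S \<longleftrightarrow> v \<in> S" using closed uv unfolding level_edges_def by blast
    with True show ?thesis by (simp add: indicator_def)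
  next
    case False
    \<comment> \<open>a strict inequality has room \<open>2 \<delta>\<close>, which absorbs the two shifts of size at most \<open>\<delta>\<close>\<close>
    then have "2 * \<delta> \<le> x v - x u" using gap uv by force
    moreover have "\<bar>d * indicator S u\<bar> \<le> \<delta>" "\<bar>d * indicator S v\<bar> \<le> \<delta>"
      using d by (auto simp: indicator_def)
    ultimately show ?thesis by (simp add: abs_le_iff)
  qed
  have "?y p = 0" if "p \<notin> D" for p
    using that S(1) cone_C_memD(1)[OF x] by (auto simp: indicator_def)
  moreover have "?y (top_node D) = 0"
    using S(2) cone_C_memD(2)[OF x] by simp
  moreover have "?y (i, j) \<le> ?y (i - 1, j)" if "(i, j) \<in> D" "(i - 1, j) \<in> D" for i j
    using that mono T_adj_up DT cone_C_memD(3)[OF x] by blast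
  moreover have "?y (i - 1, j + 1) \<le> ?y (i, j)" if "(i, j) \<in> D" "(i - 1, j + 1) \<in> D" for i j
    using that mono T_adj_up_right[THEN T_adj_sym] DT cone_C_memD(4)[OF x] by blast
  ultimately show ?thesis unfolding cone_C_def by blast
qed

lemma ray_face_symmetric_perturbation:
  assumes face: "fface_of {y. \<exists>t::real. t \<ge> 0 \<and> y = (\<lambda>p. t * e p)} C"
    and plus: "(\<lambda>p. e p + z p) \<in> C" and minus: "(\<lambda>p. e p - z p) \<in> C"
    and z: "z \<noteq> (\<lambda>p. 0)"
  shows "\<exists>t. z = (\<lambda>p. t * e p)"
proof -
  let ?F = "{y. \<exists>t::real. t \<ge> 0 \<and> y = (\<lambda>p. t * e p)}"
  have extreme: "\<forall>a\<in>C. \<forall>b\<in>C. \<forall>x\<in>?F. a \<noteq> b \<and> (\<exists>u::real. 0 < u \<and> u < 1 \<and> x = (\<lambda>p. (1 - u) * a p + u * b p))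
      \<longrightarrow> a \<in> ?F \<and> b \<in> ?F"
    using face unfolding fface_of_def by (elim conjE)
  have "e \<in> ?F" by (intro CollectI exI[of _ 1]) simp
  moreover have "(\<lambda>p. e p + z p) \<noteq> (\<lambda>p. e p - z p)"
    using z by (auto simp: fun_eq_iff)
  moreover have "\<exists>u::real. 0 < u \<and> u < 1 \<and> e = (\<lambda>p. (1 - u) * (e p + z p) + u * (e p - z p))"
    by (intro exI[of _ "1 / 2"]) (auto simp: fun_eq_iff field_simps)
  ultimately have "(\<lambda>p. e p + z p) \<in> ?F"
    using extreme[rule_format, OF plus minus] by blast
  then obtain t where t: "(\<lambda>p. e p + z p) = (\<lambda>p. t * e p)" by blast
  have "z p = (t - 1) * e p" for p
    using fun_cong[OF t, of p] by (auto simp: left_diff_distrib)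
  then show ?thesis by blast
qed

lemma min_int_edge_dir_mem:
  assumes "min_int_edge_dir C e"
  shows "e \<in> C"
proof -
  have "{y. \<exists>t::real. t \<ge> 0 \<and> y = (\<lambda>p. t * e p)} \<subseteq> C"
    using assms unfolding min_int_edge_dir_def fface_of_def by (elim conjE)
  moreover have "e \<in> {y. \<exists>t::real. t \<ge> 0 \<and> y = (\<lambda>p. t * e p)}"
    by (intro CollectI exI[of _ 1]) simp
  ultimately show ?thesis by blast
qed

lemma min_int_edge_dir_unit:
  assumes e: "min_int_edge_dir C e" and vals: "\<forall>q. e q = 0 \<or> e q = c" and c: "c \<noteq> 0"
  shows "c \<in> {1, -1}"
proof -
  have int: "\<forall>q. e q \<in> \<int>" and least: "\<forall>t. t > 0 \<and> (\<forall>q. t * e q \<in> \<int>) \<longrightarrow> 1 \<le> t"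
    and "e \<noteq> (\<lambda>q. 0)"
    using e unfolding min_int_edge_dir_def by blast+
  then have "\<exists>q. e q \<noteq> 0" by (simp add: fun_eq_iff)
  then obtain q where "e q = c" using vals by blast
  then obtain k :: int where k: "c = of_int k" using int by (metis Ints_cases)
  have "(1 / \<bar>c\<bar>) * e q \<in> \<int>" for q
  proof (cases "e q = 0")
    case False
    then have "e q = c" using vals by blast
    then have "(1 / \<bar>c\<bar>) * e q = sgn c" by (simp add: real_sgn_eq)
    then show ?thesis by (simp add: sgn_if)
  qed simp
  then have "1 \<le> 1 / \<bar>c\<bar>" using least c by simp
  then have "\<bar>c\<bar> \<le> 1" using c by (simp add: le_divide_eq)
  then show ?thesis using c unfolding k by auto
qed


lemma min_int_edge_dir_on_component:
  assumes ord: "ordinary n D" and e: "min_int_edge_dir (cone_C D) e" and p: "p \<in> D"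
    and top: "top_node D \<notin> (level_edges n D e)\<^sup>* `` {p}"
  shows "e q = (if q \<in> (level_edges n D e)\<^sup>* `` {p} then e p else 0)"
proof -
  define S where "S = (level_edges n D e)\<^sup>* `` {p}"
  have eC: "e \<in> cone_C D" using e by (rule min_int_edge_dir_mem)
  have DT: "D \<subseteq> T_nodes n" using ord unfolding ordinary_def by blast
  have SD: "S \<subseteq> D" unfolding S_def using level_edges_rtrancl p by blast
  have pS: "p \<in> S" unfolding S_def by blast
  have closed: "a \<in> S \<longleftrightarrow> b \<in> S" if "(a, b) \<in> level_edges n D e" for a b
    unfolding S_def using sym_rtrancl_Image_iff[OF sym_level_edges that] .
  obtain \<gamma> where \<gamma>: "\<gamma> > 0" "\<forall>a\<in>D. \<forall>b\<in>D. e a \<noteq> e b \<longrightarrow> \<gamma> \<le> \<bar>e a - e b\<bar>"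
    using finite_values_gap[OF ordinary_finite[OF ord]] by blast
  define \<delta> where "\<delta> = \<gamma> / 2"
  have gap: "\<forall>a\<in>D. \<forall>b\<in>D. e a \<noteq> e b \<longrightarrow> 2 * \<delta> \<le> \<bar>e a - e b\<bar>"
    using \<gamma>(2) unfolding \<delta>_def by simp
  have "\<delta> > 0" unfolding \<delta>_def using \<gamma>(1) by simp
  define z where "z = (\<lambda>q. \<delta> * indicator S q :: real)"
  have "(\<lambda>q. e q + z q) \<in> cone_C D"
    unfolding z_def using cone_C_shift_indicator[OF eC DT SD top[folded S_def] closed gap, of \<delta>] \<open>\<delta> > 0\<close> by simp
  moreover have "(\<lambda>q. e q - z q) \<in> cone_C D"
    unfolding z_def using cone_C_shift_indicator[OF eC DT SD top[folded S_def] closed gap, of "- \<delta>"] \<open>\<delta> > 0\<close> by simp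
  moreover have "z p \<noteq> 0" unfolding z_def using pS \<open>\<delta> > 0\<close> by simp
  moreover have "fface_of {y. \<exists>t::real. t \<ge> 0 \<and> y = (\<lambda>q. t * e q)} (cone_C D)"
    using e unfolding min_int_edge_dir_def by blast
  moreover have "z \<noteq> (\<lambda>q. 0)" using \<open>z p \<noteq> 0\<close> by auto
  ultimately obtain t where t: "z = (\<lambda>q. t * e q)"
    using ray_face_symmetric_perturbation by blast
  have "t \<noteq> 0" using \<open>z p \<noteq> 0\<close> t by auto
  then have "e q = z q / t" for q using t by simp
  then show ?thesis unfolding z_def S_def using pS[unfolded S_def] by (simp add: indicator_def)
qed

lemma min_int_edge_dir_support_component:
  assumes ord: "ordinary n D" and e: "min_int_edge_dir (cone_C D) e"
  obtains p where "p \<in> D" "e p \<noteq> 0"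
    "\<And>q. e q = (if q \<in> (level_edges n D e)\<^sup>* `` {p} then e p else 0)"
proof -
  have eC: "e \<in> cone_C D" using e by (rule min_int_edge_dir_mem)
  have "\<exists>p. e p \<noteq> 0" using e unfolding min_int_edge_dir_def by (simp add: fun_eq_iff)
  then obtain p where p: "e p \<noteq> 0" by blast
  then have pD: "p \<in> D" using cone_C_memD(1)[OF eC] by blast
  have "top_node D \<notin> (level_edges n D e)\<^sup>* `` {p}"
    using level_edges_rtrancl[of p "top_node D" n D e] pD p cone_C_memD(2)[OF eC] by auto
  then show thesis
    using that[OF pD p] min_int_edge_dir_on_component[OF ord e pD] by blast
qed

lemma min_int_edge_dir_zero_reaches_top:
  assumes ord: "ordinary n D" and e: "min_int_edge_dir (cone_C D) e"
    and q: "q \<in> D" "e q = 0"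
  shows "q \<in> (level_edges n D e)\<^sup>* `` {top_node D}"
proof (rule ccontr)
  assume "q \<notin> (level_edges n D e)\<^sup>* `` {top_node D}"
  then have "top_node D \<notin> (level_edges n D e)\<^sup>* `` {q}"
    using sym_level_edges[THEN sym_rtrancl, THEN symD] by blast
  then have "e p = 0" for p
    using min_int_edge_dir_on_component[OF ord e q(1), of p] q(2) by simp
  then show False using e unfolding min_int_edge_dir_def by auto
qed

theorem mainTheorem6:
  fixes n :: nat and D :: "node set" and eps :: "node \<Rightarrow> real"
  assumes "n \<ge> 1"
    and "ordinary n D"
    and "min_int_edge_dir (cone_C D) eps"
  shows "\<exists>D1 D2. ordinary n D1 \<and> ordinary n D2 \<and> D1 \<inter> D2 = {} \<and> D1 \<union> D2 = D \<and>
           top_node D \<in> D1 \<and>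
           (\<exists>c::real. c \<in> {1, -1} \<and> (\<forall>p\<in>D1. eps p = 0) \<and> (\<forall>p\<in>D2. eps p = c))"
proof -
  let ?comp = "\<lambda>p. (level_edges n D eps)\<^sup>* `` {p}"
  obtain p0 where p0: "p0 \<in> D" "eps p0 \<noteq> 0"
    and eps_comp: "\<And>q. eps q = (if q \<in> ?comp p0 then eps p0 else 0)"
    using min_int_edge_dir_support_component[OF assms(2,3)] by blast
  have epsC: "eps \<in> cone_C D" using assms(3) by (rule min_int_edge_dir_mem)
  have top: "top_node D \<in> D" "eps (top_node D) = 0"
    using top_node_in_ordinary[OF assms(2)] cone_C_memD(2)[OF epsC] by auto
  have vals: "eps q = 0 \<or> eps q = eps p0" for q
    using eps_comp[of q] by (cases "q \<in> ?comp p0") auto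
  define D1 D2 where "D1 = {q \<in> D. eps q = eps (top_node D)}" and "D2 = {q \<in> D. eps q = eps p0}"
  have "ordinary n D1"
    unfolding D1_def using min_int_edge_dir_zero_reaches_top[OF assms(2,3)] top
    by (intro ordinary_level_set[OF assms(2) epsC top(1)]) auto
  moreover have "ordinary n D2"
    unfolding D2_def
  proof (intro ordinary_level_set[OF assms(2) epsC p0(1)] subsetI)
    fix q assume "q \<in> {q \<in> D. eps q = eps p0}"
    then show "q \<in> ?comp p0" using eps_comp[of q] p0(2) by (cases "q \<in> ?comp p0") auto
  qed
  moreover have "eps p0 \<in> {1, -1}"
    using min_int_edge_dir_unit[OF assms(3) _ p0(2)] vals by blast
  moreover have "D1 \<inter> D2 = {}" "D1 \<union> D2 = D" "top_node D \<in> D1"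
    using top p0 vals unfolding D1_def D2_def by auto
  moreover have "\<forall>p\<in>D1. eps p = 0" "\<forall>p\<in>D2. eps p = eps p0"
    using top(2) unfolding D1_def D2_def by auto
  ultimately show ?thesis by blast
qed

end
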